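(* Let $\Omega\subset\mathbb{R}^2$ have property (i). 1. If $\Omega$ has property $( * )$, then for every point $\omega\in\partial\Omega$ there exists $\omega^\diamond\in\partial\Omega^\diamond$ such that $\omega\in L(\omega^\diamond)$. 2. If $\Omega$ has property $( ** )$, then for every point $\omega^\diamond\in\partial\Omega^\diamond$ there exists $\omega\in\partial\Omega$ such that $\omega\in L(\omega^\diamond)$.
   Context: Points of $\mathbb{R}^2$: $(x,y)$; of $\mathbb{R}^{2*}$: $(p,q)$. Antipolar: $\Omega^\diamond=\{(p,q):px-qy\ge1\ \forall (x,y)\in\Omega\}$. For $\omega^\diamond=(p,q)$, $L(\omega^\diamond)=\{(x,y)\in\mathbb{R}^2: px-qy=1\}$. Property (i): $\Omega$ nonempty, convex, closed, $0\notin\Omega$, $\lambda\Omega\subset\Omega$ for all $\lambda>1$. $( * )$: $\lambda\Omega\cap\partial\Omega=\varnothing$ for all $\lambda>1$. $( ** )$: with $C=\operatorname{cl}(\mathbb{R}_+\Omega)$, $\mathbb{R}_+=[0,\infty)$, and $\partial C=l_0\cup l_1$ its two boundary rays, $\operatorname{dist}(l_0,\Omega)=\operatorname{dist}(l_1,\Omega)=0$. *)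

theory Defs
  imports "HOL-Analysis.Analysis"
begin

definition antipolar :: "(real \<times> real) set \<Rightarrow> (real \<times> real) set" where
  "antipolar \<Omega> = {(p, q). \<forall>(x, y) \<in> \<Omega>. p * x - q * y \<ge> 1}"

definition Lline :: "real \<times> real \<Rightarrow> (real \<times> real) set" where
  "Lline w = {(x, y). fst w * x - snd w * y = 1}"

definition prop_i :: "(real \<times> real) set \<Rightarrow> bool" where
  "prop_i \<Omega> \<longleftrightarrow> \<Omega> \<noteq> {} \<and> convex \<Omega> \<and> closed \<Omega> \<and> (0::real \<times> real) \<notin> \<Omega> \<and>
     (\<forall>l::real. l > 1 \<longrightarrow> (\<lambda>x. l *\<^sub>R x) ` \<Omega> \<subseteq> \<Omega>)"

definition prop_star :: "(real \<times> real) set \<Rightarrow> bool" where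
  "prop_star \<Omega> \<longleftrightarrow> (\<forall>l::real. l > 1 \<longrightarrow> ((\<lambda>x. l *\<^sub>R x) ` \<Omega>) \<inter> frontier \<Omega> = {})"

definition cone_hull0 :: "(real \<times> real) set \<Rightarrow> (real \<times> real) set" where
  "cone_hull0 \<Omega> = closure {t *\<^sub>R w | t w. t \<ge> 0 \<and> w \<in> \<Omega>}"

definition ray0 :: "real \<times> real \<Rightarrow> (real \<times> real) set" where
  "ray0 u = {t *\<^sub>R u | t. t \<ge> 0}"

definition prop_starstar :: "(real \<times> real) set \<Rightarrow> bool" where
  "prop_starstar \<Omega> \<longleftrightarrow> (\<exists>u0 u1. u0 \<noteq> 0 \<and> u1 \<noteq> 0 \<and>
      frontier (cone_hull0 \<Omega>) = ray0 u0 \<union> ray0 u1 \<and>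
      setdist (ray0 u0) \<Omega> = 0 \<and> setdist (ray0 u1) \<Omega> = 0)"

end

theory Submission
  imports Defs
begin

text \<open>After the reflection \<open>(p, q) \<mapsto> (p, -q)\<close> the pairing \<open>px - qy\<close> becomes the inner
  product, and \<open>\<Omega>\<^sup>\<diamond>\<close> becomes the intersection of the closed half-planes \<open>{a. a \<bullet> z \<ge> 1}\<close>,
  \<open>z \<in> \<Omega>\<close>. Whenever \<open>a \<in> \<Omega>\<^sup>\<diamond>\<close> and \<open>z \<in> \<Omega>\<close> satisfy \<open>a \<bullet> z = 1\<close>, the line \<open>{y. a \<bullet> y = 1}\<close>
  supports \<open>\<Omega>\<close> at \<open>z\<close> and the line \<open>{b. b \<bullet> z = 1}\<close> supports \<open>\<Omega>\<^sup>\<diamond>\<close> at \<open>a\<close>, so both points are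
  boundary points; it remains to produce such contact pairs.

  Part 1: a supporting line of \<open>\<Omega>\<close> at \<open>\<omega>\<close> cannot pass through the origin, since it would
  then also support \<open>\<Omega>\<close> at \<open>2\<omega>\<close>, contradicting \<open>(*)\<close>; normalised to \<open>a \<bullet> z = 1\<close> it
  gives the contact pair \<open>(a, \<omega>)\<close>.

  Part 2: if \<open>a \<in> \<Omega>\<^sup>\<diamond>\<close> vanished somewhere on \<open>C - {0}\<close>, that point would be on \<open>\<partial>C\<close>, so
  \<open>a\<close> would vanish on a boundary ray, which then stays at distance \<open>\<ge> 1/|a|\<close> from \<open>\<Omega>\<close>,
  contradicting \<open>(**)\<close>. By compactness of \<open>C \<inter> S\<^sup>1\<close> we get \<open>a \<bullet> z \<ge> m |z|\<close> on \<open>C\<close>. If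
  \<open>a \<bullet> z = 1\<close> had no solution in \<open>\<Omega>\<close>, compactness near the origin together with this
  linear growth would give \<open>a \<bullet> z \<ge> 1 + \<delta> |z|\<close> on \<open>\<Omega>\<close>, so the ball of radius \<open>\<delta>\<close> about
  \<open>a\<close> would lie in \<open>\<Omega>\<^sup>\<diamond>\<close> and \<open>a\<close> would be an interior point.\<close>

definition inner_antipolar :: "'a::real_inner set \<Rightarrow> 'a set" where
  "inner_antipolar S = {a. \<forall>z\<in>S. 1 \<le> a \<bullet> z}"

lemma closed_inner_antipolar: "closed (inner_antipolar S)"
proof -
  have "inner_antipolar S = (\<Inter>z\<in>S. {a. 1 \<le> z \<bullet> a})"
    by (auto simp: inner_antipolar_def inner_commute)
  then show ?thesis
    by (simp add: closed_INT closed_halfspace_ge)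
qed

lemma supporting_hyperplane_imp_frontier:
  fixes S :: "'a::real_inner set"
  assumes "a \<noteq> 0" "\<And>y. y \<in> S \<Longrightarrow> c \<le> a \<bullet> y" "x \<in> S" "a \<bullet> x = c"
  shows "x \<in> frontier S"
proof -
  have "interior S \<subseteq> interior {y. c \<le> a \<bullet> y}"
    using assms(2) by (intro interior_mono) blast
  then have "interior S \<subseteq> {y. c < a \<bullet> y}"
    using assms(1) by simp
  then show ?thesis
    using assms(3,4) closure_subset by (auto simp: frontier_def)
qed

lemma convex_supporting_hyperplane:
  fixes S :: "'a::euclidean_space set"
  assumes "convex S" "x \<in> S" "x \<notin> interior S"
  obtains a where "a \<noteq> 0" "\<And>y. y \<in> S \<Longrightarrow> a \<bullet> x \<le> a \<bullet> y"
proof (cases "interior S = {}")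
  case True
  then obtain a b where "a \<noteq> 0" and hyp: "S \<subseteq> {y. a \<bullet> y = b}"
    using empty_interior_subset_hyperplane[OF assms(1)] by metis
  have "a \<bullet> x \<le> a \<bullet> y" if "y \<in> S" for y
    using subsetD[OF hyp assms(2)] subsetD[OF hyp that] by simp
  with \<open>a \<noteq> 0\<close> show ?thesis
    using that by blast
next
  case False
  then have "x \<notin> rel_interior S"
    using assms(3) by (simp add: rel_interior_nonempty_interior)
  then show ?thesis
    using supporting_hyperplane_rel_boundary[OF assms(1,2)] that by metis
qed

lemma inner_antipolar_contact_frontier:
  assumes "a \<in> inner_antipolar S" "x \<in> S" "a \<bullet> x = 1"
  shows "x \<in> frontier S" "a \<in> frontier (inner_antipolar S)"
proof -
  have "a \<noteq> 0" "x \<noteq> 0"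
    using assms(3) by auto
  with assms show "x \<in> frontier S" "a \<in> frontier (inner_antipolar S)"
    by (auto simp: inner_antipolar_def inner_commute
        intro: supporting_hyperplane_imp_frontier[of a _ 1] supporting_hyperplane_imp_frontier[of x _ 1])
qed

lemma frontier_inner_antipolar_through_frontier_point:
  fixes S :: "'a::euclidean_space set"
  assumes "convex S" "closed S" "x \<in> frontier S"
    and "l > 1" "l *\<^sub>R x \<in> S" "l *\<^sub>R x \<notin> frontier S"
  obtains a where "a \<in> frontier (inner_antipolar S)" "a \<bullet> x = 1"
proof -
  have "x \<in> S" "x \<notin> interior S"
    using assms(2,3) by (auto simp: frontier_def)
  then obtain b where "b \<noteq> 0" and supp: "\<And>y. y \<in> S \<Longrightarrow> b \<bullet> x \<le> b \<bullet> y"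
    using convex_supporting_hyperplane assms(1) by blast
  have "0 \<le> (l - 1) * (b \<bullet> x)"
    using supp[OF assms(5)] by (simp add: algebra_simps)
  then have "0 \<le> b \<bullet> x"
    using assms(4) by (simp add: zero_le_mult_iff)
  moreover have "b \<bullet> x \<noteq> 0"
  proof
    assume "b \<bullet> x = 0"
    then have "l *\<^sub>R x \<in> frontier S"
      using \<open>b \<noteq> 0\<close> supp assms(5) by (intro supporting_hyperplane_imp_frontier[of b S 0]) auto
    with assms(6) show False
      by contradiction
  qed
  ultimately have pos: "0 < b \<bullet> x"
    by simp
  define a where "a = (1 / (b \<bullet> x)) *\<^sub>R b"
  have "a \<bullet> x = 1"
    using pos by (simp add: a_def)
  moreover have "a \<in> inner_antipolar S"
    using supp pos by (auto simp: a_def inner_antipolar_def field_simps)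
  ultimately show thesis
    using that inner_antipolar_contact_frontier(2)[OF _ \<open>x \<in> S\<close>] by blast
qed

lemma prop_star_frontier_inner_antipolar:
  assumes "prop_i S" "prop_star S" "x \<in> frontier S"
  obtains a where "a \<in> frontier (inner_antipolar S)" "a \<bullet> x = 1"
proof -
  have "convex S" "closed S"
    using assms(1) by (auto simp: prop_i_def)
  with assms(3) have "x \<in> S"
    using frontier_subset_closed by blast
  have "(1::real) < 2"
    by simp
  then have "(\<lambda>x. 2 *\<^sub>R x) ` S \<subseteq> S" "(\<lambda>x. 2 *\<^sub>R x) ` S \<inter> frontier S = {}"
    using assms(1,2) unfolding prop_i_def prop_star_def by blast+
  with \<open>x \<in> S\<close> have "2 *\<^sub>R x \<in> S - frontier S"
    by blast
  then show thesis
    using frontier_inner_antipolar_through_frontier_point[of S x 2] \<open>convex S\<close> \<open>closed S\<close> assms(3) that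
    by auto
qed

lemma setdist_ge_inner_antipolar:
  fixes S T :: "'a::real_inner set"
  assumes "a \<in> inner_antipolar S" "S \<noteq> {}" "T \<noteq> {}" "\<And>x. x \<in> T \<Longrightarrow> a \<bullet> x \<le> 0"
  shows "1 / norm a \<le> setdist T S"
proof -
  have "1 / norm a \<le> dist x y" if "x \<in> T" "y \<in> S" for x y
  proof -
    have "1 \<le> a \<bullet> y - a \<bullet> x"
      using assms(1,4) that by (fastforce simp: inner_antipolar_def)
    also have "\<dots> \<le> norm a * dist x y"
      using norm_cauchy_schwarz[of a "y - x"] by (simp add: inner_diff_right dist_norm norm_minus_commute)
    finally have "1 \<le> norm a * dist x y" .
    moreover from this have "a \<noteq> 0"
      by auto
    ultimately show ?thesis
      by (simp add: divide_le_eq mult.commute)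
  qed
  then show ?thesis
    using assms(2,3) by (simp add: le_setdist_iff)
qed

lemma inner_antipolar_nonneg_on_closure_cone_hull:
  fixes S :: "'a::real_inner set"
  assumes "a \<in> inner_antipolar S" "z \<in> closure (cone hull S)"
  shows "0 \<le> a \<bullet> z"
proof -
  have "cone hull S \<subseteq> {z. 0 \<le> a \<bullet> z}"
    using assms(1) by (fastforce simp: cone_hull_expl inner_antipolar_def)
  then have "closure (cone hull S) \<subseteq> {z. 0 \<le> a \<bullet> z}"
    by (simp add: closure_minimal closed_halfspace_ge)
  then show ?thesis
    using assms(2) by blast
qed

lemma cone_hull0_eq: "cone_hull0 S = closure (cone hull S)"
  by (simp add: cone_hull0_def cone_hull_expl)

lemma prop_starstar_inner_antipolar_pos:
  assumes "prop_starstar S" "S \<noteq> {}" "a \<in> inner_antipolar S"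
    and "z \<in> cone_hull0 S" "z \<noteq> 0"
  shows "0 < a \<bullet> z"
proof (rule ccontr)
  obtain u0 u1 where fr: "frontier (cone_hull0 S) = ray0 u0 \<union> ray0 u1"
    and dist0: "setdist (ray0 u0) S = 0" "setdist (ray0 u1) S = 0"
    using assms(1) unfolding prop_starstar_def by blast
  have nonneg: "0 \<le> a \<bullet> y" if "y \<in> cone_hull0 S" for y
    using inner_antipolar_nonneg_on_closure_cone_hull assms(3) that by (simp add: cone_hull0_eq)
  have "a \<noteq> 0"
    using assms(2,3) by (auto simp: inner_antipolar_def)
  assume "\<not> 0 < a \<bullet> z"
  with nonneg[OF assms(4)] have "a \<bullet> z = 0"
    by linarith
  then have "z \<in> frontier (cone_hull0 S)"
    using \<open>a \<noteq> 0\<close> nonneg assms(4) by (intro supporting_hyperplane_imp_frontier[of a _ 0]) auto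
  then obtain u t where u: "u = u0 \<or> u = u1" and "z = t *\<^sub>R u"
    unfolding fr ray0_def by blast
  with \<open>a \<bullet> z = 0\<close> assms(5) have "a \<bullet> u = 0"
    by auto
  then have "a \<bullet> x \<le> 0" if "x \<in> ray0 u" for x
    using that unfolding ray0_def by force
  moreover have "0 \<in> ray0 u"
    unfolding ray0_def by (rule CollectI, rule exI[of _ 0]) simp
  ultimately have "1 / norm a \<le> setdist (ray0 u) S"
    using setdist_ge_inner_antipolar[OF assms(3,2)] by blast
  with \<open>a \<noteq> 0\<close> u dist0 show False
    by auto
qed

lemma cone_inner_linear_lower_bound:
  fixes C :: "'a::euclidean_space set"
  assumes "closed C" "cone C" "\<And>z. z \<in> C \<Longrightarrow> z \<noteq> 0 \<Longrightarrow> 0 < a \<bullet> z"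
  obtains m where "m > 0" "\<And>z. z \<in> C \<Longrightarrow> m * norm z \<le> a \<bullet> z"
proof -
  let ?K = "C \<inter> sphere 0 1"
  have normalized: "(1 / norm z) *\<^sub>R z \<in> ?K" if "z \<in> C" "z \<noteq> 0" for z
    using that assms(2) by (simp add: mem_cone)
  show thesis
  proof (cases "?K = {}")
    case True
    then have "z = 0" if "z \<in> C" for z
      using normalized that by blast
    then have "1 * norm z \<le> a \<bullet> z" if "z \<in> C" for z
      using that by fastforce
    then show thesis
      using that[of 1] by simp
  next
    case False
    have "compact ?K"
      using assms(1) by (simp add: closed_Int_compact)
    moreover have "continuous_on ?K (\<lambda>y. a \<bullet> y)"
      by (intro continuous_intros)
    ultimately obtain k where k: "k \<in> ?K" and kmin: "\<And>y. y \<in> ?K \<Longrightarrow> a \<bullet> k \<le> a \<bullet> y"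
      using continuous_attains_inf[OF _ False] by blast
    have "a \<bullet> k * norm z \<le> a \<bullet> z" if "z \<in> C" for z
    proof (cases "z = 0")
      case False
      then have "a \<bullet> k \<le> (a \<bullet> z) / norm z"
        using kmin[OF normalized[OF that False]] by simp
      with False show ?thesis
        by (simp add: le_divide_eq)
    qed simp
    moreover have "0 < a \<bullet> k"
      using k assms(3)[of k] by fastforce
    ultimately show thesis
      using that by blast
  qed
qed

lemma inner_gt_one_uniform_gap:
  fixes S :: "'a::euclidean_space set"
  assumes "closed S" "\<And>z. z \<in> S \<Longrightarrow> 1 < a \<bullet> z"
    and "m > 0" "\<And>z. z \<in> S \<Longrightarrow> m * norm z \<le> a \<bullet> z"
  obtains d where "d > 0" "\<And>z. z \<in> S \<Longrightarrow> 1 + d * norm z \<le> a \<bullet> z"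
proof -
  define R where "R = 2 / m"
  have "R > 0"
    using assms(3) by (simp add: R_def)
  obtain \<mu> where "\<mu> > 1" and near: "\<And>z. z \<in> S \<inter> cball 0 R \<Longrightarrow> \<mu> \<le> a \<bullet> z"
  proof (cases "S \<inter> cball 0 R = {}")
    case False
    have "compact (S \<inter> cball 0 R)"
      using assms(1) by (simp add: closed_Int_compact)
    moreover have "continuous_on (S \<inter> cball 0 R) (\<lambda>y. a \<bullet> y)"
      by (intro continuous_intros)
    ultimately obtain z0 where "z0 \<in> S \<inter> cball 0 R" "\<And>y. y \<in> S \<inter> cball 0 R \<Longrightarrow> a \<bullet> z0 \<le> a \<bullet> y"
      using continuous_attains_inf[OF _ False] by blast
    then show thesis
      using that[of "a \<bullet> z0"] assms(2) by blast
  qed (use that[of 2] in auto)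
  define d where "d = min (m / 2) ((\<mu> - 1) / R)"
  show thesis
  proof (rule that)
    show "d > 0"
      using assms(3) \<open>\<mu> > 1\<close> \<open>R > 0\<close> by (simp add: d_def)
    fix z assume "z \<in> S"
    show "1 + d * norm z \<le> a \<bullet> z"
    proof (cases "norm z \<le> R")
      case True
      have "d * norm z \<le> ((\<mu> - 1) / R) * R"
        using True \<open>d > 0\<close> by (intro mult_mono) (auto simp: d_def)
      with \<open>R > 0\<close> near[of z] \<open>z \<in> S\<close> True show ?thesis
        by simp
    next
      case False
      have "d \<le> m / 2"
        unfolding d_def by (rule min.cobounded1)
      then have "d * norm z \<le> (m / 2) * norm z"
        by (rule mult_right_mono) simp
      moreover have "1 < (m / 2) * norm z"
        using False assms(3) by (simp add: R_def field_simps)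
      ultimately show ?thesis
        using assms(4)[OF \<open>z \<in> S\<close>] by linarith
    qed
  qed
qed

lemma ball_subset_inner_antipolar:
  fixes S :: "'a::real_inner set"
  assumes "\<And>z. z \<in> S \<Longrightarrow> 1 + d * norm z \<le> a \<bullet> z"
  shows "ball a d \<subseteq> inner_antipolar S"
proof (clarsimp simp: inner_antipolar_def)
  fix b z assume "dist a b < d" "z \<in> S"
  have "(a - b) \<bullet> z \<le> norm (a - b) * norm z"
    by (rule norm_cauchy_schwarz)
  also have "\<dots> \<le> d * norm z"
    using \<open>dist a b < d\<close> by (intro mult_right_mono) (auto simp: dist_norm)
  finally have "a \<bullet> z - b \<bullet> z \<le> d * norm z"
    by (simp add: inner_diff_left)
  then show "1 \<le> b \<bullet> z"
    using assms[OF \<open>z \<in> S\<close>] by linarith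
qed

lemma frontier_inner_antipolar_attains_one:
  fixes S :: "'a::euclidean_space set"
  assumes "closed S" "a \<in> frontier (inner_antipolar S)"
    and "m > 0" "\<And>z. z \<in> S \<Longrightarrow> m * norm z \<le> a \<bullet> z"
  shows "\<exists>x\<in>S. a \<bullet> x = 1"
proof (rule ccontr)
  assume "\<not> (\<exists>x\<in>S. a \<bullet> x = 1)"
  moreover have "a \<in> inner_antipolar S"
    using assms(2) frontier_subset_closed[OF closed_inner_antipolar] by blast
  ultimately have "1 < a \<bullet> z" if "z \<in> S" for z
    using that by (force simp: inner_antipolar_def)
  then obtain d where "d > 0" "\<And>z. z \<in> S \<Longrightarrow> 1 + d * norm z \<le> a \<bullet> z"
    using inner_gt_one_uniform_gap assms(1,3,4) by blast
  then have "ball a d \<subseteq> inner_antipolar S"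
    using ball_subset_inner_antipolar by blast
  with \<open>d > 0\<close> have "a \<in> interior (inner_antipolar S)"
    unfolding mem_interior by blast
  with assms(2) show False
    by (simp add: frontier_def)
qed

lemma prop_starstar_frontier_inner_antipolar:
  assumes "prop_i S" "prop_starstar S" "a \<in> frontier (inner_antipolar S)"
  obtains x where "x \<in> frontier S" "a \<bullet> x = 1"
proof -
  have "S \<noteq> {}" "closed S"
    using assms(1) by (auto simp: prop_i_def)
  have "a \<in> inner_antipolar S"
    using assms(3) frontier_subset_closed[OF closed_inner_antipolar] by blast
  have "closed (cone_hull0 S)" "cone (cone_hull0 S)"
    by (simp_all add: cone_hull0_eq cone_closure cone_cone_hull)
  moreover have "0 < a \<bullet> z" if "z \<in> cone_hull0 S" "z \<noteq> 0" for z
    using prop_starstar_inner_antipolar_pos assms(2) \<open>S \<noteq> {}\<close> \<open>a \<in> inner_antipolar S\<close> that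
    by blast
  ultimately obtain m where "m > 0" and lower: "\<And>z. z \<in> cone_hull0 S \<Longrightarrow> m * norm z \<le> a \<bullet> z"
    using cone_inner_linear_lower_bound by metis
  have "S \<subseteq> cone_hull0 S"
    using closure_subset hull_subset by (fastforce simp: cone_hull0_eq)
  then obtain x where "x \<in> S" "a \<bullet> x = 1"
    using frontier_inner_antipolar_attains_one[OF \<open>closed S\<close> assms(3) \<open>m > 0\<close>] lower by blast
  then show thesis
    using that inner_antipolar_contact_frontier(1) \<open>a \<in> inner_antipolar S\<close> by blast
qed

definition flip_snd :: "real \<times> real \<Rightarrow> real \<times> real" where
  "flip_snd w = (fst w, - snd w)"

lemma inner_flip_snd: "flip_snd w \<bullet> z = fst w * fst z - snd w * snd z"
  by (simp add: flip_snd_def inner_prod_def)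

lemma flip_snd_flip_snd [simp]: "flip_snd (flip_snd w) = w"
  by (simp add: flip_snd_def)

lemma linear_flip_snd: "linear flip_snd"
  by (rule linearI) (auto simp: flip_snd_def)

lemma antipolar_eq_flip_snd_image: "antipolar \<Omega> = flip_snd ` inner_antipolar \<Omega>"
proof -
  have *: "w \<in> antipolar \<Omega> \<longleftrightarrow> flip_snd w \<in> inner_antipolar \<Omega>" for w
    by (auto simp: antipolar_def inner_antipolar_def inner_flip_snd case_prod_beta)
  show ?thesis
  proof (intro set_eqI iffI)
    fix w assume "w \<in> antipolar \<Omega>"
    then show "w \<in> flip_snd ` inner_antipolar \<Omega>"
      using * by (metis flip_snd_flip_snd imageI)
  next
    fix w assume "w \<in> flip_snd ` inner_antipolar \<Omega>"
    then show "w \<in> antipolar \<Omega>"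
      using * by (metis flip_snd_flip_snd imageE)
  qed
qed

lemma frontier_antipolar: "frontier (antipolar \<Omega>) = flip_snd ` frontier (inner_antipolar \<Omega>)"
proof -
  have "inj flip_snd"
    by (metis flip_snd_flip_snd injI)
  with linear_flip_snd show ?thesis
    by (simp add: antipolar_eq_flip_snd_image frontier_def closure_injective_linear_image[symmetric]
        interior_injective_linear_image image_set_diff)
qed

lemma mem_Lline_iff: "z \<in> Lline w \<longleftrightarrow> flip_snd w \<bullet> z = 1"
  by (simp add: Lline_def inner_flip_snd case_prod_beta)

theorem proposition1:
  fixes \<Omega> :: "(real \<times> real) set"
  assumes "prop_i \<Omega>"
  shows "(prop_star \<Omega> \<longrightarrow>
           (\<forall>\<omega> \<in> frontier \<Omega>. \<exists>\<omega>' \<in> frontier (antipolar \<Omega>). \<omega> \<in> Lline \<omega>'))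
       \<and> (prop_starstar \<Omega> \<longrightarrow>
           (\<forall>\<omega>' \<in> frontier (antipolar \<Omega>). \<exists>\<omega> \<in> frontier \<Omega>. \<omega> \<in> Lline \<omega>'))"
proof (intro conjI impI ballI)
  fix \<omega> assume "prop_star \<Omega>" "\<omega> \<in> frontier \<Omega>"
  then obtain a where "a \<in> frontier (inner_antipolar \<Omega>)" "a \<bullet> \<omega> = 1"
    using prop_star_frontier_inner_antipolar assms by blast
  then show "\<exists>\<omega>'\<in>frontier (antipolar \<Omega>). \<omega> \<in> Lline \<omega>'"
    by (intro bexI[of _ "flip_snd a"]) (simp_all add: mem_Lline_iff frontier_antipolar)
next
  fix \<omega>' assume "prop_starstar \<Omega>" "\<omega>' \<in> frontier (antipolar \<Omega>)"
  then have "flip_snd \<omega>' \<in> frontier (inner_antipolar \<Omega>)"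
    by (auto simp: frontier_antipolar)
  then obtain \<omega> where "\<omega> \<in> frontier \<Omega>" "flip_snd \<omega>' \<bullet> \<omega> = 1"
    using prop_starstar_frontier_inner_antipolar assms \<open>prop_starstar \<Omega>\<close> by blast
  then show "\<exists>\<omega>\<in>frontier \<Omega>. \<omega> \<in> Lline \<omega>'"
    by (auto simp: mem_Lline_iff)
qed

end
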